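(* For every integer $m\ge 1$, $$\sum_{b=0}^{m}\sum_{d=0}^{b}\sum_{a=d}^{m-b}(-1)^{a-d}\binom{m-b}{a}\binom{a+b-d}{b}\binom{b}{d}=1.$$ *)

theory Defs
  imports Main
begin

end

theory Submission
  imports Defs
begin

text \<open>For fixed \<open>a\<close> and \<open>b\<close>, the sum over \<open>d\<close> of
  \<open>(-1)^d C(b,d) C(a+b-d,b)\<close> is the \<open>b\<close>-th backward difference of \<open>x \<mapsto> C(x,b)\<close>
  at \<open>x = a+b\<close>, hence equals 1. Pulling out \<open>(-1)^a C(m-b,a)\<close>, the sum over \<open>d\<close>
  and \<open>a\<close> becomes \<open>\<Sum>\<^sub>a (-1)^a C(m-b,a)\<close>, which vanishes unless \<open>b = m\<close>.
  Only the term \<open>b = m\<close> survives and it is 1.\<close>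

lemma alternating_sum_choose_Suc:
  fixes g :: "nat \<Rightarrow> 'a::comm_ring_1"
  shows "(\<Sum>d\<le>Suc b. (-1)^d * of_nat (Suc b choose d) * g d)
       = (\<Sum>d\<le>b. (-1)^d * of_nat (b choose d) * (g d - g (Suc d)))"
proof -
  have "(\<Sum>d\<le>Suc b. (-1)^d * of_nat (Suc b choose d) * g d)
      = g 0 + (\<Sum>d\<le>b. (-1)^Suc d * of_nat (Suc b choose Suc d) * g (Suc d))"
    by (subst sum.atMost_Suc_shift) simp
  also have "\<dots> = g 0 + (\<Sum>d\<le>b. (-1)^Suc d * of_nat (b choose Suc d) * g (Suc d))
            + (\<Sum>d\<le>b. (-1)^Suc d * of_nat (b choose d) * g (Suc d))"
    by (simp only: binomial_Suc_Suc of_nat_add distrib_left distrib_right sum.distrib add.assoc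
        add.commute[of "\<Sum>d\<le>b. (-1)^Suc d * of_nat (b choose d) * g (Suc d)"])
  also have "g 0 + (\<Sum>d\<le>b. (-1)^Suc d * of_nat (b choose Suc d) * g (Suc d))
           = (\<Sum>d\<le>Suc b. (-1)^d * of_nat (b choose d) * g d)"
    by (subst sum.atMost_Suc_shift) simp
  also have "\<dots> = (\<Sum>d\<le>b. (-1)^d * of_nat (b choose d) * g d)"
    by (simp add: binomial_eq_0)
  finally show ?thesis
    by (simp add: sum_subtractf sum_negf right_diff_distrib)
qed

lemma alternating_sum_choose_mult_choose:
  "(\<Sum>d\<le>b. (-1::int)^d * int (b choose d) * int ((a + b - d) choose b)) = 1"
proof (induction b)
  case 0
  show ?case by simp
next
  case (Suc b)
  have pascal: "int (Suc k choose Suc b) - int (k choose Suc b) = int (k choose b)" for k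
    by simp
  have "(\<Sum>d\<le>Suc b. (-1::int)^d * int (Suc b choose d) * int ((a + Suc b - d) choose Suc b))
      = (\<Sum>d\<le>b. (-1::int)^d * int (b choose d) * int ((a + b - d) choose b))"
    by (simp only: alternating_sum_choose_Suc[where g = "\<lambda>d. int ((a + Suc b - d) choose Suc b)"])
      (rule sum.cong, simp_all add: Suc_diff_le pascal)
  with Suc.IH show ?case by simp
qed

lemma double_sum_eq_alternating_sum_choose:
  fixes n b :: nat
  shows "(\<Sum>d=0..b. \<Sum>a=d..n.
            (-1::int) ^ (a - d) * int (n choose a) * int ((a + b - d) choose b) * int (b choose d))
       = (\<Sum>a\<le>n. (-1::int)^a * int (n choose a))"
proof -
  define t where "t a d = (-1::int) ^ (a - d) * int (n choose a) * int ((a + b - d) choose b) * int (b choose d)" for a d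
  have vanish: "t a d = 0" if "a < d" "d \<le> b" for a d
  proof -
    have "a + b - d < b"
      using that by linarith
    then show ?thesis by (simp add: t_def)
  qed
  have split_sign: "t a d = (-1)^a * int (n choose a) * ((-1)^d * int (b choose d) * int ((a + b - d) choose b))"
    if "d \<le> b" for a d
  proof (cases "d \<le> a")
    case True
    then have "(-1::int)^(a - d) = (-1)^a * (-1)^d"
      by (simp flip: neg_one_power_add_eq_neg_one_power_diff add: power_add)
    then show ?thesis by (simp add: t_def algebra_simps)
  next
    case False
    then have "a + b - d < b"
      using that by linarith
    then show ?thesis by (simp add: t_def)
  qed
  have "(\<Sum>d=0..b. \<Sum>a=d..n. t a d) = (\<Sum>d\<le>b. \<Sum>a\<le>n. t a d)"
  proof (rule sum.cong)
    fix d assume "d \<in> {..b}"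
    then show "(\<Sum>a=d..n. t a d) = (\<Sum>a\<le>n. t a d)"
      by (intro sum.mono_neutral_left) (auto intro: vanish)
  qed (simp add: atLeast0AtMost)
  also have "\<dots> = (\<Sum>a\<le>n. \<Sum>d\<le>b. t a d)"
    by (rule sum.swap)
  also have "\<dots> = (\<Sum>a\<le>n. (-1::int)^a * int (n choose a))"
    by (simp add: split_sign sum_distrib_left[symmetric] alternating_sum_choose_mult_choose)
  finally show ?thesis by (simp add: t_def)
qed

theorem mainTheorem4:
  fixes m :: nat
  assumes "m \<ge> 1"
  shows "(\<Sum>b=0..m. \<Sum>d=0..b. \<Sum>a=d..m-b.
            (-1::int) ^ (a - d) * int ((m - b) choose a) * int ((a + b - d) choose b) * int (b choose d)) = 1"
proof -
  have "(\<Sum>a\<le>m - b. (-1::int)^a * int ((m - b) choose a)) = (if b = m then 1 else 0)"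
    if "b \<in> {0..m}" for b
    using that by (auto simp: choose_alternating_sum)
  then show ?thesis
    by (simp add: double_sum_eq_alternating_sum_choose)
qed

end
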